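(* Let $G$ be a graph with a vertex $r$ that belongs to at least one but not all minimum vertex covers of $G$ (so $\mathrm{OPT}(G-r)+1=\mathrm{OPT}(G)$) and with $N[r]\subsetneq V(G)$. Let $Y$ be a minimal blocking set of $G$ with $r\notin Y$. Then at least one of the following holds: (1) $Y$ is a minimal blocking set of $G-r$; (2) $Y\cap N[r]=\emptyset$ and $Y$ is a minimal blocking set of $G-N[r]$; (3) there is a minimal blocking set $Y'\subsetneq Y$ of $G-r$ such that $\hat Y=Y\setminus Y'$ is a minimal blocking set of $G-Y'$, $\hat Y$ is not a blocking set of $G-Y'-r$, and there is a nonempty set $Z\subseteq N(r)\setminus Y'$ such that $\hat Y\cup Z$ is a minimal blocking set of $G-Y'-r$.
   Context: $\mathrm{OPT}(G)$ is the minimum vertex cover size; minimum vertex covers have size $\mathrm{OPT}(G)$. $Y\subseteq V(G)$ is a blocking set if no minimum vertex cover contains $Y$; minimal if no proper subset is a blocking set. $N(r)$ is the open and $N[r]=N(r)\cup\{r\}$ the closed neighborhood of $r$. *)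

theory Defs
  imports Main
begin

text \<open>Vertex deletion G - S is modelled by
replacing V with V - S (only edges with both ends in the vertex set count).\<close>

definition graph :: "'a set \<Rightarrow> ('a \<Rightarrow> 'a \<Rightarrow> bool) \<Rightarrow> bool" where
  "graph V E \<longleftrightarrow> finite V \<and> (\<forall>u v. E u v \<longrightarrow> E v u) \<and> (\<forall>v. \<not> E v v)"

definition vertex_cover :: "'a set \<Rightarrow> ('a \<Rightarrow> 'a \<Rightarrow> bool) \<Rightarrow> 'a set \<Rightarrow> bool" where
  "vertex_cover V E C \<longleftrightarrow> C \<subseteq> V \<and> (\<forall>u\<in>V. \<forall>v\<in>V. E u v \<longrightarrow> u \<in> C \<or> v \<in> C)"

definition OPT :: "'a set \<Rightarrow> ('a \<Rightarrow> 'a \<Rightarrow> bool) \<Rightarrow> nat" where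
  "OPT V E = (LEAST k. \<exists>C. vertex_cover V E C \<and> card C = k)"

definition min_vertex_cover :: "'a set \<Rightarrow> ('a \<Rightarrow> 'a \<Rightarrow> bool) \<Rightarrow> 'a set \<Rightarrow> bool" where
  "min_vertex_cover V E C \<longleftrightarrow> vertex_cover V E C \<and> card C = OPT V E"

definition blocking_set :: "'a set \<Rightarrow> ('a \<Rightarrow> 'a \<Rightarrow> bool) \<Rightarrow> 'a set \<Rightarrow> bool" where
  "blocking_set V E Y \<longleftrightarrow> Y \<subseteq> V \<and> \<not> (\<exists>C. min_vertex_cover V E C \<and> Y \<subseteq> C)"

definition minimal_blocking_set :: "'a set \<Rightarrow> ('a \<Rightarrow> 'a \<Rightarrow> bool) \<Rightarrow> 'a set \<Rightarrow> bool" where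
  "minimal_blocking_set V E Y \<longleftrightarrow> blocking_set V E Y \<and> (\<forall>Y'. Y' \<subset> Y \<longrightarrow> \<not> blocking_set V E Y')"

definition open_nbhd :: "'a set \<Rightarrow> ('a \<Rightarrow> 'a \<Rightarrow> bool) \<Rightarrow> 'a \<Rightarrow> 'a set" where
  "open_nbhd V E r = {v \<in> V. E r v}"

definition closed_nbhd :: "'a set \<Rightarrow> ('a \<Rightarrow> 'a \<Rightarrow> bool) \<Rightarrow> 'a \<Rightarrow> 'a set" where
  "closed_nbhd V E r = insert r (open_nbhd V E r)"

end

theory Submission
  imports Defs
begin

text \<open>If \<open>S\<close> lies in some minimum vertex cover of \<open>G\<close>, the minimum covers of \<open>G - S\<close> are
exactly the sets \<open>C - S\<close> for minimum covers \<open>C \<supseteq> S\<close> of \<open>G\<close>; hence a set disjoint from \<open>S\<close>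
blocks \<open>G - S\<close> iff its union with \<open>S\<close> blocks \<open>G\<close>. As \<open>r\<close> lies in a minimum cover, \<open>Y\<close> blocks
\<open>G - r\<close>. If it is not minimal there, take a minimal blocking set \<open>Y' \<subset> Y\<close> of \<open>G - r\<close>. Then \<open>r\<close>
lies in no minimum cover of \<open>G - Y'\<close>, so deleting \<open>r\<close> from \<open>G - Y'\<close> keeps OPT and the minimum
covers of \<open>G - Y'\<close> are those of \<open>G - Y' - r\<close> containing \<open>N(r) - Y'\<close>. If \<open>Y - Y'\<close> still blocks
\<open>G - Y' - r\<close>, a counting argument puts every proper subset of \<open>Y\<close> into a minimum cover avoiding
\<open>r\<close>, hence containing \<open>N(r)\<close>; this forces \<open>Y \<inter> N[r] = {}\<close> and minimality of \<open>Y\<close> in \<open>G - N[r]\<close>.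
Otherwise \<open>(Y - Y') \<union> (N(r) - Y')\<close> blocks \<open>G - Y' - r\<close>, and a minimal \<open>Z \<subseteq> N(r) - Y'\<close> with
\<open>(Y - Y') \<union> Z\<close> blocking does the job.\<close>

lemma finite_minimal_subset:
  assumes "finite X" "P X"
  shows "\<exists>Z\<subseteq>X. P Z \<and> (\<forall>Z'. Z' \<subset> Z \<longrightarrow> \<not> P Z')"
proof -
  have "finite {Z. Z \<subseteq> X \<and> P Z}" using assms(1) by simp
  from finite_has_minimal2[OF this, of X] assms(2)
  obtain Z where "Z \<subseteq> X" "P Z" "\<forall>Z'. Z' \<subseteq> X \<and> P Z' \<longrightarrow> Z' \<subseteq> Z \<longrightarrow> Z = Z'" by auto
  then show ?thesis by (metis order.trans psubsetE psubset_imp_subset)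
qed

lemma graph_finite: "graph V E \<Longrightarrow> finite V"
  unfolding graph_def by simp

lemma graph_Diff: "graph V E \<Longrightarrow> graph (V - S) E"
  unfolding graph_def by simp

lemma vertex_cover_finite: "finite V \<Longrightarrow> vertex_cover V E C \<Longrightarrow> finite C"
  unfolding vertex_cover_def using finite_subset by blast

lemma OPT_le_card: "finite V \<Longrightarrow> vertex_cover V E C \<Longrightarrow> OPT V E \<le> card C"
  unfolding OPT_def by (rule Least_le) auto

lemma min_vertex_cover_exists: "finite V \<Longrightarrow> \<exists>C. min_vertex_cover V E C"
proof -
  have "vertex_cover V E V" unfolding vertex_cover_def by auto
  then have "\<exists>k C. vertex_cover V E C \<and> card C = k" by blast
  then have "\<exists>C. vertex_cover V E C \<and> card C = OPT V E"
    unfolding OPT_def by (rule LeastI_ex)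
  then show ?thesis unfolding min_vertex_cover_def .
qed

lemma min_vertex_cover_if_card_le:
  "finite V \<Longrightarrow> vertex_cover V E C \<Longrightarrow> card C \<le> OPT V E \<Longrightarrow> min_vertex_cover V E C"
  unfolding min_vertex_cover_def using OPT_le_card le_antisym by blast

lemma min_vertex_cover_card_le:
  "finite V \<Longrightarrow> min_vertex_cover V E C \<Longrightarrow> vertex_cover V E D \<Longrightarrow> card C \<le> card D"
  unfolding min_vertex_cover_def using OPT_le_card by metis

lemma vertex_cover_Diff: "vertex_cover V E C \<Longrightarrow> vertex_cover (V - S) E (C - S)"
  unfolding vertex_cover_def by blast

lemma vertex_cover_Un_deleted: "vertex_cover (V - S) E D \<Longrightarrow> S \<subseteq> V \<Longrightarrow> vertex_cover V E (D \<union> S)"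
  unfolding vertex_cover_def by blast

lemma open_nbhd_subset_vertex_cover:
  "vertex_cover V E C \<Longrightarrow> r \<in> V \<Longrightarrow> r \<notin> C \<Longrightarrow> open_nbhd V E r \<subseteq> C"
  unfolding vertex_cover_def open_nbhd_def by blast

lemma vertex_cover_of_delete_vertex:
  "graph V E \<Longrightarrow> vertex_cover (V - {r}) E D \<Longrightarrow> open_nbhd V E r \<subseteq> D \<Longrightarrow> vertex_cover V E D"
  unfolding vertex_cover_def graph_def open_nbhd_def by blast

lemma blocking_set_mono:
  "blocking_set V E Y \<Longrightarrow> Y \<subseteq> Z \<Longrightarrow> Z \<subseteq> V \<Longrightarrow> blocking_set V E Z"
  unfolding blocking_set_def by blast

lemma blocking_set_nonempty: "finite V \<Longrightarrow> blocking_set V E Y \<Longrightarrow> Y \<noteq> {}"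
  unfolding blocking_set_def using min_vertex_cover_exists by blast

lemma exists_minimal_blocking_subset:
  assumes "finite V" "blocking_set V E Y"
  shows "\<exists>Y'\<subseteq>Y. minimal_blocking_set V E Y'"
proof -
  have "finite Y" using assms finite_subset unfolding blocking_set_def by blast
  from finite_minimal_subset[OF this, of "blocking_set V E"] assms(2)
  show ?thesis unfolding minimal_blocking_set_def by blast
qed

lemma proper_subset_of_minimal_blocking_set:
  "minimal_blocking_set V E Y \<Longrightarrow> W \<subset> Y \<Longrightarrow> \<exists>C. min_vertex_cover V E C \<and> W \<subseteq> C"
  unfolding minimal_blocking_set_def blocking_set_def by blast

context
  fixes V :: "'a set" and E and C0 S
  assumes finite: "finite V" and C0: "min_vertex_cover V E C0" and S: "S \<subseteq> C0"
begin

lemma OPT_delete_subset_of_min_cover: "OPT (V - S) E + card S = OPT V E"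
proof -
  have vc: "vertex_cover V E C0" and k: "card C0 = OPT V E"
    using C0 unfolding min_vertex_cover_def by auto
  have "finite C0" using vertex_cover_finite[OF finite vc] .
  then have c: "card (C0 - S) + card S = card C0"
    using S by (metis card_Diff_subset card_mono finite_subset le_add_diff_inverse2)
  have "S \<subseteq> V" using vc S unfolding vertex_cover_def by blast
  have "OPT (V - S) E = card (C0 - S)"
    unfolding OPT_def
  proof (rule Least_equality)
    show "\<exists>C. vertex_cover (V - S) E C \<and> card C = card (C0 - S)"
      using vertex_cover_Diff[OF vc] by blast
    fix n assume "\<exists>D. vertex_cover (V - S) E D \<and> card D = n"
    then obtain D where D: "vertex_cover (V - S) E D" "card D = n" by blast
    have "card C0 \<le> card (D \<union> S)"
      using min_vertex_cover_card_le[OF finite C0 vertex_cover_Un_deleted[OF D(1) \<open>S \<subseteq> V\<close>]] .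
    also have "\<dots> \<le> card D + card S" by (rule card_Un_le)
    finally show "card (C0 - S) \<le> n" using c D(2) by simp
  qed
  then show ?thesis using c k by simp
qed

lemma min_vertex_cover_Un_deleted:
  assumes "min_vertex_cover (V - S) E D"
  shows "min_vertex_cover V E (D \<union> S)"
proof (rule min_vertex_cover_if_card_le[OF finite])
  have "S \<subseteq> V" using C0 S unfolding min_vertex_cover_def vertex_cover_def by blast
  then show "vertex_cover V E (D \<union> S)"
    using assms vertex_cover_Un_deleted unfolding min_vertex_cover_def by blast
  show "card (D \<union> S) \<le> OPT V E"
    using card_Un_le[of D S] assms OPT_delete_subset_of_min_cover
    unfolding min_vertex_cover_def by simp
qed

lemma min_vertex_cover_Diff_deleted:
  assumes "min_vertex_cover V E C" "S \<subseteq> C"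
  shows "min_vertex_cover (V - S) E (C - S)"
proof (rule min_vertex_cover_if_card_le)
  show "finite (V - S)" using finite by simp
  show "vertex_cover (V - S) E (C - S)"
    using assms(1) vertex_cover_Diff unfolding min_vertex_cover_def by blast
  have "finite C" using assms(1) finite vertex_cover_finite unfolding min_vertex_cover_def by blast
  then show "card (C - S) \<le> OPT (V - S) E"
    using assms OPT_delete_subset_of_min_cover card_Diff_subset[of S C] finite_subset[of S C]
    unfolding min_vertex_cover_def by simp
qed

lemma blocking_set_delete_iff:
  "blocking_set (V - S) E Y \<longleftrightarrow> Y \<inter> S = {} \<and> blocking_set V E (Y \<union> S)"
proof -
  have "S \<subseteq> V" using C0 S unfolding min_vertex_cover_def vertex_cover_def by blast
  moreover have "(\<exists>D. min_vertex_cover (V - S) E D \<and> Y \<subseteq> D) \<longleftrightarrow>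
      (\<exists>C. min_vertex_cover V E C \<and> Y \<union> S \<subseteq> C)" if "Y \<inter> S = {}"
  proof
    assume "\<exists>D. min_vertex_cover (V - S) E D \<and> Y \<subseteq> D"
    then show "\<exists>C. min_vertex_cover V E C \<and> Y \<union> S \<subseteq> C"
      using min_vertex_cover_Un_deleted by blast
  next
    assume "\<exists>C. min_vertex_cover V E C \<and> Y \<union> S \<subseteq> C"
    then show "\<exists>D. min_vertex_cover (V - S) E D \<and> Y \<subseteq> D"
      using min_vertex_cover_Diff_deleted that by blast
  qed
  ultimately show ?thesis unfolding blocking_set_def by blast
qed

end

lemma minimal_blocking_set_Diff:
  assumes "finite V" "minimal_blocking_set V E Y" "Y' \<subset> Y"
  shows "minimal_blocking_set (V - Y') E (Y - Y')"
proof -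
  obtain C0 where C0: "min_vertex_cover V E C0" "Y' \<subseteq> C0"
    using proper_subset_of_minimal_blocking_set[OF assms(2,3)] by blast
  note delete_iff = blocking_set_delete_iff[OF assms(1) C0]
  have "(Y - Y') \<inter> Y' = {}" "(Y - Y') \<union> Y' = Y" using assms(3) by blast+
  then have "blocking_set (V - Y') E (Y - Y')"
    using delete_iff assms(2) unfolding minimal_blocking_set_def by simp
  moreover have "\<not> blocking_set (V - Y') E W" if "W \<subset> Y - Y'" for W
  proof -
    have "W \<union> Y' \<subset> Y" using that assms(3) by blast
    then have "\<not> blocking_set V E (W \<union> Y')" using assms(2) unfolding minimal_blocking_set_def by blast
    then show ?thesis using delete_iff by simp
  qed
  ultimately show ?thesis unfolding minimal_blocking_set_def by blast
qed

lemma OPT_delete_avoided_vertex: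
  assumes "finite V" "r \<in> V" "\<forall>C. min_vertex_cover V E C \<longrightarrow> r \<notin> C"
  shows "OPT (V - {r}) E = OPT V E"
proof (rule antisym)
  obtain C where C: "min_vertex_cover V E C" using min_vertex_cover_exists[OF assms(1)] by blast
  then have "vertex_cover (V - {r}) E C"
    using assms(3) vertex_cover_Diff[of V E C "{r}"] unfolding min_vertex_cover_def by auto
  then show "OPT (V - {r}) E \<le> OPT V E"
    using OPT_le_card[of "V - {r}" E C] assms(1) C unfolding min_vertex_cover_def by simp
  show "OPT V E \<le> OPT (V - {r}) E"
  proof (rule ccontr)
    assume less: "\<not> OPT V E \<le> OPT (V - {r}) E"
    obtain D where D: "min_vertex_cover (V - {r}) E D"
      using min_vertex_cover_exists assms(1) by blast
    then have "vertex_cover V E (D \<union> {r})"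
      using vertex_cover_Un_deleted assms(2) unfolding min_vertex_cover_def by blast
    moreover have "card (D \<union> {r}) \<le> OPT V E"
      using less card_Un_le[of D "{r}"] D unfolding min_vertex_cover_def by simp
    ultimately have "min_vertex_cover V E (D \<union> {r})"
      using min_vertex_cover_if_card_le assms(1) by blast
    then show False using assms(3) by blast
  qed
qed

lemma min_vertex_cover_delete_avoided_vertex_iff:
  assumes "graph V E" "r \<in> V" "\<forall>C. min_vertex_cover V E C \<longrightarrow> r \<notin> C"
  shows "min_vertex_cover V E C \<longleftrightarrow> min_vertex_cover (V - {r}) E C \<and> open_nbhd V E r \<subseteq> C"
proof -
  have "finite V" using assms(1) by (rule graph_finite)
  note OPT_eq = OPT_delete_avoided_vertex[OF this assms(2,3)]
  show ?thesis
  proof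
    assume C: "min_vertex_cover V E C"
    then have "r \<notin> C" using assms(3) by blast
    then show "min_vertex_cover (V - {r}) E C \<and> open_nbhd V E r \<subseteq> C"
      using C OPT_eq vertex_cover_Diff[of V E C "{r}"] open_nbhd_subset_vertex_cover[OF _ assms(2)]
      unfolding min_vertex_cover_def by auto
  next
    assume "min_vertex_cover (V - {r}) E C \<and> open_nbhd V E r \<subseteq> C"
    then show "min_vertex_cover V E C"
      using OPT_eq vertex_cover_of_delete_vertex[OF assms(1)] unfolding min_vertex_cover_def by auto
  qed
qed

lemma isolated_vertex_not_in_min_vertex_cover:
  assumes "graph V E" "open_nbhd V E r = {}" "min_vertex_cover V E C"
  shows "r \<notin> C"
proof
  assume r: "r \<in> C"
  have "vertex_cover V E (C - {r})"
    using assms unfolding graph_def open_nbhd_def min_vertex_cover_def vertex_cover_def by blast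
  moreover have "finite V" using assms(1) by (rule graph_finite)
  moreover have "finite C"
    using assms(3) vertex_cover_finite[OF \<open>finite V\<close>] unfolding min_vertex_cover_def by blast
  ultimately show False
    using r assms(3) min_vertex_cover_card_le[of V E C "C - {r}"] card_Diff1_less[of C r] by simp
qed

lemma blocking_set_delete_closed_nbhd_iff:
  assumes "graph V E" "r \<in> V" "min_vertex_cover V E C0" "r \<notin> C0" "r \<notin> W"
  shows "blocking_set (V - closed_nbhd V E r) E W \<longleftrightarrow>
    W \<inter> open_nbhd V E r = {} \<and> blocking_set V E (W \<union> open_nbhd V E r)"
proof -
  define N where "N = open_nbhd V E r"
  have "vertex_cover V E C0" using assms(3) by (simp add: min_vertex_cover_def)
  then have "N \<subseteq> C0" unfolding N_def using assms(2,4) by (rule open_nbhd_subset_vertex_cover)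
  have "\<not> E r r" using assms(1) by (simp add: graph_def)
  \<comment> \<open>In \<open>G - N(r)\<close> the vertex \<open>r\<close> is isolated, so deleting it does not change the minimum covers.\<close>
  then have r: "r \<in> V - N" "open_nbhd (V - N) E r = {}"
    using assms(2) unfolding N_def open_nbhd_def by auto
  have G: "graph (V - N) E" using assms(1) by (rule graph_Diff)
  have "\<forall>C. min_vertex_cover (V - N) E C \<longrightarrow> r \<notin> C"
    using isolated_vertex_not_in_min_vertex_cover[OF G r(2)] by blast
  from min_vertex_cover_delete_avoided_vertex_iff[OF G r(1) this]
  have "min_vertex_cover (V - N - {r}) E C \<longleftrightarrow> min_vertex_cover (V - N) E C" for C
    using r(2) by simp
  moreover have "V - closed_nbhd V E r = V - N - {r}" unfolding closed_nbhd_def N_def by blast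
  ultimately have "blocking_set (V - closed_nbhd V E r) E W \<longleftrightarrow> blocking_set (V - N) E W"
    using assms(5) unfolding blocking_set_def by auto
  also have "\<dots> \<longleftrightarrow> W \<inter> N = {} \<and> blocking_set V E (W \<union> N)"
  proof (rule blocking_set_delete_iff)
    show "finite V" using assms(1) by (rule graph_finite)
  qed fact+
  finally show ?thesis unfolding N_def .
qed

lemma minimal_blocking_set_delete_closed_nbhd:
  assumes "graph V E" "r \<in> V" "r \<notin> Y" "minimal_blocking_set V E Y"
    and avoiding: "\<And>W. W \<subset> Y \<Longrightarrow> \<exists>C. min_vertex_cover V E C \<and> W \<subseteq> C \<and> r \<notin> C"
  shows "Y \<inter> closed_nbhd V E r = {} \<and> minimal_blocking_set (V - closed_nbhd V E r) E Y"
proof -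
  define N where "N = open_nbhd V E r"
  have nbhd_in_cover: "N \<subseteq> C" if "min_vertex_cover V E C" "r \<notin> C" for C
    using open_nbhd_subset_vertex_cover[OF _ assms(2) that(2)] that(1)
    unfolding N_def min_vertex_cover_def by blast
  have "Y \<noteq> {}"
    using blocking_set_nonempty[OF graph_finite[OF assms(1)]] assms(4)
    unfolding minimal_blocking_set_def by blast
  then obtain C0 where C0: "min_vertex_cover V E C0" "r \<notin> C0" using avoiding by blast
  note delete_iff = blocking_set_delete_closed_nbhd_iff[OF assms(1,2) C0]
  have "Y \<inter> N = {}"
  proof (rule ccontr)
    assume "Y \<inter> N \<noteq> {}"
    then obtain y where "y \<in> Y" "y \<in> N" by blast
    then obtain C where "min_vertex_cover V E C" "Y - {y} \<subseteq> C" "r \<notin> C"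
      using avoiding[of "Y - {y}"] by blast
    then have "min_vertex_cover V E C \<and> Y \<subseteq> C" using nbhd_in_cover \<open>y \<in> N\<close> by blast
    then show False using assms(4) unfolding minimal_blocking_set_def blocking_set_def by blast
  qed
  have "blocking_set (V - closed_nbhd V E r) E Y"
  proof -
    have "N \<subseteq> V" unfolding N_def open_nbhd_def by blast
    then have "blocking_set V E (Y \<union> N)"
      using blocking_set_mono assms(4) unfolding minimal_blocking_set_def blocking_set_def by blast
    then show ?thesis using delete_iff assms(3) \<open>Y \<inter> N = {}\<close> unfolding N_def by blast
  qed
  moreover have "\<not> blocking_set (V - closed_nbhd V E r) E W" if W: "W \<subset> Y" for W
  proof -
    obtain C where "min_vertex_cover V E C" "W \<subseteq> C" "r \<notin> C" using avoiding[OF W] by blast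
    then have "\<not> blocking_set V E (W \<union> N)" using nbhd_in_cover unfolding blocking_set_def by blast
    moreover have "r \<notin> W" using W assms(3) by blast
    ultimately show ?thesis using delete_iff unfolding N_def by blast
  qed
  ultimately show ?thesis
    using \<open>Y \<inter> N = {}\<close> assms(3) unfolding minimal_blocking_set_def closed_nbhd_def N_def by blast
qed

lemma minimal_blocking_set_extend_by_nbhd:
  assumes "graph V E" "r \<in> V" "r \<notin> Y"
    and avoided: "\<forall>C. min_vertex_cover V E C \<longrightarrow> r \<notin> C"
    and Y: "minimal_blocking_set V E Y" "\<not> blocking_set (V - {r}) E Y"
  shows "\<exists>Z. Z \<noteq> {} \<and> Z \<subseteq> open_nbhd V E r \<and> minimal_blocking_set (V - {r}) E (Y \<union> Z)"
proof -
  define N where "N = open_nbhd V E r"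
  note cover_iff = min_vertex_cover_delete_avoided_vertex_iff[OF assms(1,2) avoided, folded N_def]
  have "\<not> E r r" using assms(1) by (simp add: graph_def)
  then have "N \<subseteq> V - {r}" unfolding N_def open_nbhd_def by blast
  moreover have "Y \<subseteq> V - {r}" using Y(1) assms(3) unfolding minimal_blocking_set_def blocking_set_def by blast
  moreover have "\<not> (\<exists>D. min_vertex_cover (V - {r}) E D \<and> Y \<union> N \<subseteq> D)"
  proof
    assume "\<exists>D. min_vertex_cover (V - {r}) E D \<and> Y \<union> N \<subseteq> D"
    then obtain D where "min_vertex_cover (V - {r}) E D" "Y \<union> N \<subseteq> D" by blast
    then have "min_vertex_cover V E D \<and> Y \<subseteq> D" using cover_iff by simp
    then show False using Y(1) unfolding minimal_blocking_set_def blocking_set_def by blast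
  qed
  ultimately have "blocking_set (V - {r}) E (Y \<union> N)" unfolding blocking_set_def by blast
  moreover have "finite N" using graph_finite[OF assms(1)] unfolding N_def open_nbhd_def by simp
  ultimately obtain Z where Z: "Z \<subseteq> N" "blocking_set (V - {r}) E (Y \<union> Z)"
    and Z_minimal: "\<And>Z'. Z' \<subset> Z \<Longrightarrow> \<not> blocking_set (V - {r}) E (Y \<union> Z')"
    using finite_minimal_subset[of N "\<lambda>Z. blocking_set (V - {r}) E (Y \<union> Z)"] by blast
  have "\<not> blocking_set (V - {r}) E W" if W: "W \<subset> Y \<union> Z" for W
  proof (cases "Y \<subseteq> W")
    case True
    then have "W = Y \<union> (W \<inter> Z)" "W \<inter> Z \<subset> Z" using W by blast+
    then show ?thesis using Z_minimal by metis
  next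
    case False
    then obtain y where y: "y \<in> Y" "y \<notin> W" by blast
    then obtain D where D: "min_vertex_cover V E D" "Y - {y} \<subseteq> D"
      using proper_subset_of_minimal_blocking_set[OF Y(1), of "Y - {y}"] by blast
    then have "min_vertex_cover (V - {r}) E D" "N \<subseteq> D" using cover_iff by simp_all
    moreover have "W \<subseteq> D" using W y Z(1) D(2) \<open>N \<subseteq> D\<close> by blast
    ultimately show ?thesis unfolding blocking_set_def by blast
  qed
  moreover have "Z \<noteq> {}" using Z(2) Y(2) by auto
  ultimately show ?thesis using Z unfolding minimal_blocking_set_def N_def by blast
qed

lemma min_cover_of_delete_blocking_set_avoids:
  assumes "finite V" "min_vertex_cover V E C1" "r \<in> C1" "min_vertex_cover V E C2" "Y' \<subseteq> C2"
    and "blocking_set (V - {r}) E Y'" "min_vertex_cover (V - Y') E D"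
  shows "r \<notin> D"
proof
  assume "r \<in> D"
  have "min_vertex_cover V E (D \<union> Y')" using min_vertex_cover_Un_deleted[OF assms(1,4,5,7)] .
  moreover have "blocking_set V E (Y' \<union> {r})"
    using blocking_set_delete_iff[of V E C1 "{r}" Y'] assms(1-3,6) by simp
  ultimately show False using \<open>r \<in> D\<close> unfolding blocking_set_def by blast
qed

lemma proper_subset_in_min_cover_avoiding:
  assumes "finite V" "r \<notin> Y" "minimal_blocking_set V E Y" "Y' \<subset> Y"
    and avoided: "\<forall>C. min_vertex_cover (V - Y') E C \<longrightarrow> r \<notin> C"
    and blocking: "blocking_set (V - Y' - {r}) E (Y - Y')"
    and W: "W \<subset> Y"
  shows "\<exists>C. min_vertex_cover V E C \<and> W \<subseteq> C \<and> r \<notin> C"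
proof -
  obtain C2 where C2: "min_vertex_cover V E C2" "Y' \<subseteq> C2"
    using proper_subset_of_minimal_blocking_set[OF assms(3,4)] by blast
  have "r \<notin> Y'" using assms(2,4) by blast
  show ?thesis
  proof (cases "Y' \<subseteq> W")
    case True
    then obtain C where C: "min_vertex_cover V E C" "W \<subseteq> C" "Y' \<subseteq> C"
      using proper_subset_of_minimal_blocking_set[OF assms(3) W] by blast
    then have "r \<notin> C - Y'" using min_vertex_cover_Diff_deleted[OF assms(1) C2 C(1,3)] avoided by blast
    then show ?thesis using C(1,2) \<open>r \<notin> Y'\<close> by blast
  next
    case False
    then obtain y where y: "y \<in> Y'" "y \<notin> W" by blast
    then obtain C where C: "min_vertex_cover V E C" "Y - {y} \<subseteq> C"
      using proper_subset_of_minimal_blocking_set[OF assms(3), of "Y - {y}"] assms(4) by blast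
    have "r \<notin> C"
    proof
      assume "r \<in> C"
      \<comment> \<open>Trading \<open>y\<close> for \<open>r\<close> keeps the count: \<open>C\<close> meets \<open>Y' \<union> {r}\<close> in at least \<open>card Y'\<close> vertices.\<close>
      define T where "T = insert r (Y' - {y})"
      have "y \<notin> C" using C y assms(3,4) unfolding minimal_blocking_set_def blocking_set_def by blast
      then have D_eq: "C - T = C - Y' - {r}" unfolding T_def by blast
      have vc: "vertex_cover V E C" and card_C: "card C = OPT V E"
        using C(1) unfolding min_vertex_cover_def by blast+
      have "T \<subseteq> C" using C(2) \<open>r \<in> C\<close> assms(4) unfolding T_def by blast
      moreover have "finite C" using vertex_cover_finite[OF assms(1) vc] .
      ultimately have card_D: "card (C - T) = card C - card T"
        by (meson card_Diff_subset finite_subset)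
      have "finite C2" using C2(1) vertex_cover_finite[OF assms(1)] unfolding min_vertex_cover_def by blast
      then have "finite Y'" using C2(2) by (rule finite_subset[rotated])
      then have "card T = card Y'"
        using y(1) \<open>r \<notin> Y'\<close> unfolding T_def by (metis card_Suc_Diff1 card_insert_disjoint finite_Diff Diff_iff)
      then have "card (C - T) = OPT V E - card Y'" using card_D card_C by simp
      also have "\<dots> = OPT (V - Y') E" using OPT_delete_subset_of_min_cover[OF assms(1) C2] by simp
      also have "\<dots> = OPT (V - Y' - {r}) E"
      proof (rule OPT_delete_avoided_vertex[symmetric])
        show "finite (V - Y')" using assms(1) by simp
        show "r \<in> V - Y'" using vc \<open>r \<in> C\<close> \<open>r \<notin> Y'\<close> unfolding vertex_cover_def by blast
      qed (rule avoided)
      finally have "card (C - T) \<le> OPT (V - Y' - {r}) E" by simp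
      moreover have "vertex_cover (V - Y' - {r}) E (C - T)"
        unfolding D_eq by (intro vertex_cover_Diff vc)
      ultimately have "min_vertex_cover (V - Y' - {r}) E (C - T)"
        using min_vertex_cover_if_card_le assms(1) by blast
      moreover have "Y - Y' \<subseteq> C - T" using C(2) y(1) assms(2) unfolding T_def by blast
      ultimately show False using blocking unfolding blocking_set_def by blast
    qed
    moreover have "W \<subseteq> C" using W y C(2) by blast
    ultimately show ?thesis using C(1) by blast
  qed
qed

theorem mainTheorem20:
  fixes V :: "'a set" and E :: "'a \<Rightarrow> 'a \<Rightarrow> bool" and r :: 'a and Y :: "'a set"
  assumes "graph V E"
    and "r \<in> V"
    and "\<exists>C. min_vertex_cover V E C \<and> r \<in> C"
    and "\<exists>C. min_vertex_cover V E C \<and> r \<notin> C"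
    and "closed_nbhd V E r \<subset> V"
    and "minimal_blocking_set V E Y"
    and "r \<notin> Y"
  shows "minimal_blocking_set (V - {r}) E Y
    \<or> (Y \<inter> closed_nbhd V E r = {} \<and> minimal_blocking_set (V - closed_nbhd V E r) E Y)
    \<or> (\<exists>Y'. Y' \<subset> Y \<and> minimal_blocking_set (V - {r}) E Y' \<and>
          minimal_blocking_set (V - Y') E (Y - Y') \<and>
          \<not> blocking_set (V - Y' - {r}) E (Y - Y') \<and>
          (\<exists>Z. Z \<noteq> {} \<and> Z \<subseteq> open_nbhd V E r - Y' \<and>
               minimal_blocking_set (V - Y' - {r}) E ((Y - Y') \<union> Z)))"
proof -
  have finite: "finite V" using assms(1) by (rule graph_finite)
  obtain C1 where C1: "min_vertex_cover V E C1" "r \<in> C1" using assms(3) by blast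
  have "blocking_set V E Y" using assms(6) unfolding minimal_blocking_set_def by blast
  moreover have "Y \<union> {r} \<subseteq> V" using assms(2,6) unfolding minimal_blocking_set_def blocking_set_def by blast
  ultimately have "blocking_set V E (Y \<union> {r})" by (rule blocking_set_mono[OF _ Un_upper1])
  moreover have "Y \<inter> {r} = {}" using assms(7) by blast
  moreover have "{r} \<subseteq> C1" using C1(2) by simp
  ultimately have "blocking_set (V - {r}) E Y"
    using blocking_set_delete_iff[OF finite C1(1)] by blast
  from exists_minimal_blocking_subset[OF finite_Diff[OF finite] this]
  obtain Y' where "Y' \<subseteq> Y" and Y'_minimal: "minimal_blocking_set (V - {r}) E Y'" by blast
  show ?thesis
  proof (cases "Y' = Y")
    case False
    with \<open>Y' \<subseteq> Y\<close> have Y': "Y' \<subset> Y" by blast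
    obtain C2 where C2: "min_vertex_cover V E C2" "Y' \<subseteq> C2"
      using proper_subset_of_minimal_blocking_set[OF assms(6) Y'] by blast
    have "blocking_set (V - {r}) E Y'" using Y'_minimal unfolding minimal_blocking_set_def by blast
    then have avoided: "\<forall>D. min_vertex_cover (V - Y') E D \<longrightarrow> r \<notin> D"
      using min_cover_of_delete_blocking_set_avoids[OF finite C1 C2] by blast
    have Y_hat: "minimal_blocking_set (V - Y') E (Y - Y')"
      using minimal_blocking_set_Diff[OF finite assms(6) Y'] .
    show ?thesis
    proof (cases "blocking_set (V - Y' - {r}) E (Y - Y')")
      case True
      have "\<And>W. W \<subset> Y \<Longrightarrow> \<exists>C. min_vertex_cover V E C \<and> W \<subseteq> C \<and> r \<notin> C"
        by (rule proper_subset_in_min_cover_avoiding[OF finite assms(7,6) Y' avoided True])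
      then show ?thesis using minimal_blocking_set_delete_closed_nbhd[OF assms(1,2,7,6)] by blast
    next
      case False
      have "r \<in> V - Y'" "r \<notin> Y - Y'" using Y' assms(2,7) by blast+
      from minimal_blocking_set_extend_by_nbhd[OF graph_Diff[OF assms(1)] this avoided Y_hat False]
      obtain Z where "Z \<noteq> {}" "Z \<subseteq> open_nbhd (V - Y') E r"
        "minimal_blocking_set (V - Y' - {r}) E (Y - Y' \<union> Z)" by blast
      moreover have "open_nbhd (V - Y') E r = open_nbhd V E r - Y'" unfolding open_nbhd_def by blast
      ultimately have "\<exists>Z. Z \<noteq> {} \<and> Z \<subseteq> open_nbhd V E r - Y' \<and>
          minimal_blocking_set (V - Y' - {r}) E ((Y - Y') \<union> Z)" by auto
      with Y' Y'_minimal Y_hat False show ?thesis by blast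
    qed
  qed (use Y'_minimal in blast)
qed

end
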